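(* Let $m,n,s,k,c$ be positive integers such that $nc$ is even and $k$ is odd. If $\Gamma$ is an abelian group of order $nkc$ having exactly one involution, then there is no $\mathrm{MRS}_\Gamma(m,n;s,k;c)$.
   Context: For positive integers $m,n,s,k,c$ and an abelian group $\Gamma$ of order $nkc$, an $\mathrm{MRS}_\Gamma(m,n;s,k;c)$ is a set of $c$ partially filled $m\times n$ arrays (some cells may be empty) with entries in $\Gamma$ such that: every element of $\Gamma$ appears exactly once and in a unique array; in every array each row contains exactly $s$ filled cells and each column contains exactly $k$ filled cells; and there exist $\omega,\delta\in\Gamma$ such that in every array the sum of the entries of each row is $\omega$ and the sum of the entries of each column is $\delta$. An involution is an element of order $2$. *)

theory Defs
  imports Main
begin

definition involution :: "'a::ab_group_add \<Rightarrow> bool" where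
  "involution x \<longleftrightarrow> x \<noteq> 0 \<and> x + x = 0"

text \<open>A family of c partially filled m x n arrays over the group 'a is encoded as
  A t i j (t < c array index, i < m row, j < n column); None = empty cell.
  MRS m n s k c A: the arrays form an MRS_Gamma(m,n;s,k;c), Gamma being the
  (finite) group 'a (its order n*k*c is required separately).\<close>
definition MRS :: "nat \<Rightarrow> nat \<Rightarrow> nat \<Rightarrow> nat \<Rightarrow> nat \<Rightarrow>
    (nat \<Rightarrow> nat \<Rightarrow> nat \<Rightarrow> 'a::ab_group_add option) \<Rightarrow> bool" where
  "MRS m n s k c A \<longleftrightarrow>
     (\<forall>g::'a. card {(t, i, j). t < c \<and> i < m \<and> j < n \<and> A t i j = Some g} = 1) \<and>
     (\<forall>t<c. \<forall>i<m. card {j. j < n \<and> A t i j \<noteq> None} = s) \<and>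
     (\<forall>t<c. \<forall>j<n. card {i. i < m \<and> A t i j \<noteq> None} = k) \<and>
     (\<exists>\<omega> \<delta>.
        (\<forall>t<c. \<forall>i<m. (\<Sum>j\<in>{j. j < n \<and> A t i j \<noteq> None}. the (A t i j)) = \<omega>) \<and>
        (\<forall>t<c. \<forall>j<n. (\<Sum>i\<in>{i. i < m \<and> A t i j \<noteq> None}. the (A t i j)) = \<delta>))"

end

theory Submission
  imports Defs "HOL-Library.Disjoint_Sets"
begin

text \<open>Proof idea: since every group element occurs exactly once, the sum of all entries is
  the sum of all elements of \<open>\<Gamma>\<close>, which pairs off with inverses to the unique involution
  \<open>\<iota>\<close>; adding up the column sums it is also \<open>nc\<delta>\<close>. Multiplying by \<open>k\<close> gives
  \<open>\<iota> = k\<iota> = |\<Gamma>|\<delta> = 0\<close>, a contradiction because \<open>k\<close> is odd.\<close>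

fun scale_nat :: "nat \<Rightarrow> 'a::ab_group_add \<Rightarrow> 'a" where
  "scale_nat 0 x = 0"
| "scale_nat (Suc n) x = x + scale_nat n x"

lemma scale_nat_add: "scale_nat (a + b) x = scale_nat a x + scale_nat b x"
  by (induction a) (auto simp: add.assoc)

lemma scale_nat_mult: "scale_nat (a * b) x = scale_nat a (scale_nat b x)"
  by (induction a) (auto simp: scale_nat_add)

lemma scale_nat_odd_involution:
  assumes "x + x = 0" "odd k"
  shows "scale_nat k x = x"
proof -
  have "scale_nat k x = (if odd k then x else 0)"
    using assms(1) by (induction k) (auto simp: add.assoc)
  then show ?thesis using assms(2) by simp
qed

lemma sum_constant_scale_nat: "finite A \<Longrightarrow> (\<Sum>_\<in>A. x) = scale_nat (card A) x"
  by (induction A rule: finite_induct) auto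

lemma scale_nat_card_UNIV:
  fixes x :: "'a::{ab_group_add, finite}"
  shows "scale_nat (card (UNIV :: 'a set)) x = 0"
proof -
  have "(\<Sum>y\<in>UNIV. x + y) = (\<Sum>y\<in>UNIV. y)"
    by (rule sum.reindex_bij_witness[of _ "\<lambda>y. y - x" "\<lambda>y. x + y"]) auto
  then show ?thesis
    by (simp add: sum.distrib sum_constant_scale_nat)
qed

lemma sum_UNIV_unique_involution:
  fixes \<iota> :: "'a::{ab_group_add, finite}"
  assumes "involution \<iota>" and unique: "\<And>x. involution x \<Longrightarrow> x = \<iota>"
  shows "(\<Sum>y\<in>UNIV. y) = \<iota>"
proof -
  have \<iota>: "\<iota> \<noteq> 0" "-\<iota> = \<iota>"
    using assms(1) by (auto simp: involution_def add_eq_0_iff)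
  have neg_ne: "-x \<noteq> x" if "x \<notin> {0, \<iota>}" for x
    using that unique[of x] eq_neg_iff_add_eq_0[of x x] by (auto simp: involution_def)
  have "(\<Sum>y\<in>UNIV - {0, \<iota>}. y) = 0"
    by (rule sum_involution_eq_0[where h = uminus])
       (use neg_ne \<iota> in \<open>auto simp: minus_equation_iff\<close>)
  moreover have "(\<Sum>y\<in>UNIV. y) = (\<Sum>y\<in>{0, \<iota>}. y) + (\<Sum>y\<in>UNIV - {0, \<iota>}. y)"
    using sum.subset_diff[of "{0, \<iota>}" UNIV "\<lambda>y. y"] by (simp add: add.commute)
  ultimately show ?thesis using \<iota> by simp
qed

lemma sum_UNIV_eq_sum_entries:
  fixes A :: "'b \<Rightarrow> 'a::comm_monoid_add option"
  assumes "\<And>g. card {p \<in> P. A p = Some g} = 1"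
  shows "(\<Sum>g\<in>UNIV. g) = (\<Sum>p\<in>{p \<in> P. A p \<noteq> None}. the (A p))"
proof -
  have "bij_betw (the \<circ> A) {p \<in> P. A p \<noteq> None} UNIV"
  proof (rule bij_betw_imageI)
    show "inj_on (the \<circ> A) {p \<in> P. A p \<noteq> None}"
    proof (rule inj_onI)
      fix p q assume "p \<in> {p \<in> P. A p \<noteq> None}" "q \<in> {p \<in> P. A p \<noteq> None}"
        and "(the \<circ> A) p = (the \<circ> A) q"
      then have "p \<in> {r \<in> P. A r = A p}" "q \<in> {r \<in> P. A r = A p}" by auto
      moreover have "card {r \<in> P. A r = A p} = 1"
        using assms \<open>p \<in> {p \<in> P. A p \<noteq> None}\<close> by auto
      ultimately show "p = q" by (metis card_1_singletonE singletonD)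
    qed
    show "(the \<circ> A) ` {p \<in> P. A p \<noteq> None} = UNIV"
    proof (intro set_eqI iffI)
      fix g :: 'a
      obtain p where "{r \<in> P. A r = Some g} = {p}"
        using assms[of g] by (rule card_1_singletonE)
      then show "g \<in> (the \<circ> A) ` {p \<in> P. A p \<noteq> None}" by force
    qed auto
  qed
  from sum.reindex_bij_betw[OF this, of "\<lambda>g. g"] show ?thesis by simp
qed

lemma sum_entries_by_columns:
  fixes A :: "nat \<Rightarrow> nat \<Rightarrow> nat \<Rightarrow> 'a::comm_monoid_add option"
  shows "(\<Sum>(t, i, j)\<in>{(t, i, j). t < c \<and> i < m \<and> j < n \<and> A t i j \<noteq> None}. the (A t i j))
    = (\<Sum>t<c. \<Sum>j<n. \<Sum>i\<in>{i. i < m \<and> A t i j \<noteq> None}. the (A t i j))"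
proof -
  define v where "v t i j = (if A t i j \<noteq> None then the (A t i j) else 0)" for t i j
  have cells: "{(t, i, j). t < c \<and> i < m \<and> j < n \<and> A t i j \<noteq> None}
      = {p \<in> {..<c} \<times> {..<m} \<times> {..<n}. case p of (t, i, j) \<Rightarrow> A t i j \<noteq> None}"
    by auto
  have "(\<Sum>(t, i, j)\<in>{(t, i, j). t < c \<and> i < m \<and> j < n \<and> A t i j \<noteq> None}. the (A t i j))
      = (\<Sum>(t, i, j)\<in>{..<c} \<times> {..<m} \<times> {..<n}. v t i j)"
    unfolding cells by (simp add: sum.inter_filter v_def case_prod_beta)
  also have "\<dots> = (\<Sum>t<c. \<Sum>i<m. \<Sum>j<n. v t i j)"
    by (simp only: sum.cartesian_product' case_prod_conv)
  also have "\<dots> = (\<Sum>t<c. \<Sum>j<n. \<Sum>i<m. v t i j)"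
    by (rule sum.cong[OF refl], rule sum.swap)
  also have "\<dots> = (\<Sum>t<c. \<Sum>j<n. \<Sum>i\<in>{i \<in> {..<m}. A t i j \<noteq> None}. the (A t i j))"
    by (simp only: sum.inter_filter finite_lessThan v_def)
  finally show ?thesis
    by (simp add: lessThan_def)
qed

lemma MRS_sum_UNIV:
  fixes A :: "nat \<Rightarrow> nat \<Rightarrow> nat \<Rightarrow> 'a::ab_group_add option"
  assumes "MRS m n s k c A"
  obtains \<delta> :: 'a where "(\<Sum>g\<in>UNIV. g) = scale_nat (n * c) \<delta>"
proof -
  define P where "P = {(t, i, j). t < c \<and> i < m \<and> j < n}"
  define A' where "A' = (\<lambda>(t, i, j). A t i j)"
  note mrs = assms[unfolded MRS_def]
  obtain \<delta> where columns: "\<And>t j. t < c \<Longrightarrow> j < n \<Longrightarrow>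
      (\<Sum>i\<in>{i. i < m \<and> A t i j \<noteq> None}. the (A t i j)) = \<delta>"
    using conjunct2[OF conjunct2[OF conjunct2[OF mrs]]] by blast
  have once: "card {(t, i, j). t < c \<and> i < m \<and> j < n \<and> A t i j = Some g} = 1" for g
    using conjunct1[OF mrs] by (rule spec)
  have "{p \<in> P. A' p = Some g} = {(t, i, j). t < c \<and> i < m \<and> j < n \<and> A t i j = Some g}" for g
    by (auto simp: P_def A'_def)
  then have "card {p \<in> P. A' p = Some g} = 1" for g
    by (simp only: once)
  then have "(\<Sum>g\<in>UNIV. g) = (\<Sum>p\<in>{p \<in> P. A' p \<noteq> None}. the (A' p))"
    by (rule sum_UNIV_eq_sum_entries)
  also have "\<dots> = (\<Sum>(t, i, j)\<in>{(t, i, j). t < c \<and> i < m \<and> j < n \<and> A t i j \<noteq> None}. the (A t i j))"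
    by (rule sum.cong) (auto simp: P_def A'_def)
  also have "\<dots> = (\<Sum>t<c. \<Sum>j<n. \<delta>)"
    unfolding sum_entries_by_columns by (intro sum.cong refl columns) simp_all
  also have "\<dots> = scale_nat (n * c) \<delta>"
    by (simp add: sum_constant_scale_nat scale_nat_mult mult.commute)
  finally show ?thesis by (rule that)
qed

theorem lemma3p6:
  fixes m n s k c :: nat
  assumes "m > 0" "n > 0" "s > 0" "k > 0" "c > 0"
    and "even (n * c)" and "odd k"
    and "card (UNIV :: 'a::{ab_group_add, finite} set) = n * k * c"
    and "\<exists>!x::'a. involution x"
  shows "\<not> (\<exists>A :: nat \<Rightarrow> nat \<Rightarrow> nat \<Rightarrow> 'a option. MRS m n s k c A)"
proof
  assume "\<exists>A :: nat \<Rightarrow> nat \<Rightarrow> nat \<Rightarrow> 'a option. MRS m n s k c A"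
  then obtain \<delta> :: 'a where \<delta>: "(\<Sum>g\<in>UNIV. g) = scale_nat (n * c) \<delta>"
    using MRS_sum_UNIV by blast
  obtain \<iota> :: 'a where \<iota>: "involution \<iota>" "\<And>x. involution x \<Longrightarrow> x = \<iota>"
    using assms(9) by blast
  have "\<iota> = scale_nat k \<iota>"
    using \<iota>(1) \<open>odd k\<close> by (simp add: involution_def scale_nat_odd_involution)
  also have "\<dots> = scale_nat (k * (n * c)) \<delta>"
    by (simp add: scale_nat_mult sum_UNIV_unique_involution[OF \<iota>, symmetric] \<delta>)
  also have "\<dots> = scale_nat (card (UNIV :: 'a set)) \<delta>"
    using assms(8) by (simp add: ac_simps)
  also have "\<dots> = 0"
    by (rule scale_nat_card_UNIV)
  finally show False using \<iota>(1) by (simp add: involution_def)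
qed

end
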